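(* Let $A,B$ be $d\times d$ matrices with entries in a commutative ring, such that $AB=0$. Define $c_i(A)$ by $\det(tI-A)=t^d+c_1(A)t^{d-1}+\dots+c_d(A)$, and similarly $c_j(B)$. Then $c_i(A)c_j(B)=0$ whenever $i+j>d$. *)

theory Defs
  imports "Jordan_Normal_Form.Char_Poly"
begin

definition char_coeff :: "'a :: comm_ring_1 mat \<Rightarrow> nat \<Rightarrow> 'a" where
  "char_coeff A i = coeff (char_poly A) (dim_row A - i)"

end

theory Submission
  imports Defs
begin

text \<open>Let \<open>s\<close>, \<open>t\<close> be indeterminates. The matrices \<open>sI - A\<close> and \<open>tI - B\<close> have
  entries in \<open>R[s,t]\<close>, and the constant term of their product is \<open>AB = 0\<close>; so every entry
  of the product lies in the ideal \<open>(s,t)\<close>, and its determinant \<open>\<chi>\<^sub>A(s) \<chi>\<^sub>B(t)\<close>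
  lies in \<open>(s,t)\<^sup>d\<close>. The monomial \<open>s\<^sup>d\<^sup>-\<^sup>i t\<^sup>d\<^sup>-\<^sup>j\<close> has total degree
  \<open>2d - i - j < d\<close>, hence its coefficient \<open>c\<^sub>i(A) c\<^sub>j(B)\<close> vanishes.\<close>

text \<open>Bivariate polynomials are \<open>'a poly poly\<close>, with outer variable \<open>s\<close> and inner
  variable \<open>t\<close>. Membership in \<open>(s,t)\<^sup>n\<close>: the coefficient of \<open>s\<^sup>k\<close> is divisible
  by \<open>t\<^sup>n\<^sup>-\<^sup>k\<close>.\<close>

definition vanishes_to_order :: "nat \<Rightarrow> 'a :: comm_ring_1 poly poly \<Rightarrow> bool" where
  "vanishes_to_order n f \<longleftrightarrow> (\<forall>k. [:0,1:] ^ (n - k) dvd coeff f k)"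

lemma vanishes_to_order_0: "vanishes_to_order 0 f"
  unfolding vanishes_to_order_def by simp

lemma vanishes_to_order_zero: "vanishes_to_order n 0"
  unfolding vanishes_to_order_def by simp

lemma vanishes_to_order_add:
  "vanishes_to_order n f \<Longrightarrow> vanishes_to_order n g \<Longrightarrow> vanishes_to_order n (f + g)"
  unfolding vanishes_to_order_def by (simp add: dvd_add)

lemma vanishes_to_order_mult:
  assumes "vanishes_to_order a f" and "vanishes_to_order b g"
  shows "vanishes_to_order (a + b) (f * g)"
  unfolding vanishes_to_order_def
proof
  fix k
  show "[:0,1:] ^ (a + b - k) dvd coeff (f * g) k"
    unfolding coeff_mult
  proof (rule dvd_sum)
    fix m assume "m \<in> {..k}"
    have "[:0,1:] ^ (a - m) * [:0,1:] ^ (b - (k - m)) dvd coeff f m * coeff g (k - m)"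
      using assms unfolding vanishes_to_order_def by (intro mult_dvd_mono) auto
    moreover have "[:0,1:] ^ (a + b - k) dvd ([:0,1:] :: 'a poly) ^ (a - m) * [:0,1:] ^ (b - (k - m))"
      unfolding power_add[symmetric] using \<open>m \<in> {..k}\<close> by (intro le_imp_power_dvd) auto
    ultimately show "[:0,1:] ^ (a + b - k) dvd coeff f m * coeff g (k - m)"
      by (rule dvd_trans[rotated])
  qed
qed

lemma vanishes_to_order_sum:
  assumes "\<And>i. i \<in> I \<Longrightarrow> vanishes_to_order n (g i)"
  shows "vanishes_to_order n (\<Sum>i\<in>I. g i)"
  using assms
  by (induction I rule: infinite_finite_induct) (auto simp: vanishes_to_order_zero vanishes_to_order_add)

lemma vanishes_to_order_prod:
  assumes "\<And>i. i \<in> I \<Longrightarrow> vanishes_to_order (m i) (g i)"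
  shows "vanishes_to_order (\<Sum>i\<in>I. m i) (\<Prod>i\<in>I. g i)"
  using assms
  by (induction I rule: infinite_finite_induct) (auto simp: vanishes_to_order_0 vanishes_to_order_mult)

lemma vanishes_to_order_det:
  assumes "M \<in> carrier_mat n n"
    and "\<And>i j. i < n \<Longrightarrow> j < n \<Longrightarrow> vanishes_to_order m (M $$ (i, j))"
  shows "vanishes_to_order (n * m) (det M)"
  unfolding det_def'[OF assms(1)]
proof (rule vanishes_to_order_sum)
  fix p assume "p \<in> {p. p permutes {0..<n}}"
  then have "vanishes_to_order (\<Sum>i = 0..<n. m) (\<Prod>i = 0..<n. M $$ (i, p i))"
    using assms(2) permutes_in_image by (intro vanishes_to_order_prod) fastforce
  then have "vanishes_to_order (0 + n * m) (signof p * (\<Prod>i = 0..<n. M $$ (i, p i)))"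
    by (intro vanishes_to_order_mult vanishes_to_order_0) simp
  then show "vanishes_to_order (n * m) (signof p * (\<Prod>i = 0..<n. M $$ (i, p i)))"
    by simp
qed

definition eval_origin :: "'a :: comm_ring_1 poly poly \<Rightarrow> 'a" where
  "eval_origin f = poly (poly f 0) 0"

interpretation eval_origin_hom: comm_ring_hom eval_origin
  by unfold_locales (auto simp: eval_origin_def)

lemma vanishes_to_order_1_iff: "vanishes_to_order 1 f \<longleftrightarrow> eval_origin f = 0"
proof -
  have "vanishes_to_order 1 f \<longleftrightarrow> [:- 0, 1:] dvd coeff f 0"
  proof
    assume "[:- 0, 1:] dvd coeff f 0"
    then have "[:0,1:] ^ (1 - k) dvd coeff f k" for k
      by (cases k) simp_all
    then show "vanishes_to_order 1 f"
      unfolding vanishes_to_order_def ..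
  qed (unfold vanishes_to_order_def, drule spec[of _ 0], simp)
  also have "\<dots> \<longleftrightarrow> eval_origin f = 0"
    unfolding poly_eq_0_iff_dvd[symmetric] by (simp add: eval_origin_def poly_0_coeff_0)
  finally show ?thesis .
qed

interpretation const_poly_hom: comm_ring_hom "\<lambda>a :: 'a :: comm_ring_1. [:a:]"
  by unfold_locales auto

lemma vanishes_to_order_char_poly_product:
  fixes A B :: "'a :: comm_ring_1 mat"
  assumes A: "A \<in> carrier_mat d d" and B: "B \<in> carrier_mat d d" and "A * B = 0\<^sub>m d d"
  shows "vanishes_to_order d (map_poly (\<lambda>a. [:a:]) (char_poly A) * [:char_poly B:])"
proof -
  interpret map_poly_comm_ring_hom "\<lambda>a :: 'a. [:a:]" ..
  \<comment> \<open>\<open>MA = sI - A\<close> and \<open>MB = tI - B\<close> as matrices over \<open>'a poly poly\<close>\<close>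
  define MA where "MA = map_mat (map_poly (\<lambda>a. [:a:])) (char_poly_matrix A)"
  define MB where "MB = map_mat (\<lambda>p. [:p:]) (char_poly_matrix B)"
  have MA: "MA \<in> carrier_mat d d" and MB: "MB \<in> carrier_mat d d"
    unfolding MA_def MB_def using A B by simp_all
  have "map_mat eval_origin MA = - A"
    by (rule eq_matI) (use A in \<open>auto simp: MA_def char_poly_matrix_def eval_origin_def\<close>)
  moreover have "map_mat eval_origin MB = - B"
    by (rule eq_matI) (use B in \<open>auto simp: MB_def char_poly_matrix_def eval_origin_def\<close>)
  ultimately have origin: "map_mat eval_origin (MA * MB) = 0\<^sub>m d d"
    using eval_origin_hom.mat_hom_mult[OF MA MB] A B assms(3) by simp
  have "vanishes_to_order (d * 1) (det (MA * MB))"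
  proof (rule vanishes_to_order_det)
    fix k l assume "k < d" "l < d"
    then have "eval_origin ((MA * MB) $$ (k, l)) = 0"
      using MA MB origin by (metis carrier_matD index_map_mat index_mult_mat(2,3) index_zero_mat(1))
    then show "vanishes_to_order 1 ((MA * MB) $$ (k, l))"
      using vanishes_to_order_1_iff by blast
  qed (use MA MB in simp)
  moreover have "det (MA * MB) = map_poly (\<lambda>a. [:a:]) (char_poly A) * [:char_poly B:]"
    unfolding det_mult[OF MA MB] by (simp add: MA_def MB_def char_poly_def)
  ultimately show ?thesis by simp
qed

lemma coeff_mult_eq_0_if_vanishes_to_order:
  fixes p q :: "'a :: comm_ring_1 poly"
  assumes "vanishes_to_order n (map_poly (\<lambda>a. [:a:]) p * [:q:])" and "k + l < n"
  shows "coeff p k * coeff q l = 0"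
proof -
  have "coeff (map_poly (\<lambda>a. [:a:]) p * [:q:]) k = Polynomial.smult (coeff p k) q"
    by (simp add: coeff_map_poly)
  then have "[:0,1:] ^ (n - k) dvd Polynomial.smult (coeff p k) q"
    using assms(1) unfolding vanishes_to_order_def by metis
  then have "monom 1 (n - k) dvd Polynomial.smult (coeff p k) q"
    by (simp add: monom_altdef)
  then have "coeff (Polynomial.smult (coeff p k) q) l = 0"
    using assms(2) by (simp add: monom_1_dvd_iff')
  then show ?thesis by simp
qed

theorem lemma4p12:
  fixes A B :: "'a :: comm_ring_1 mat" and d i j :: nat
  assumes "A \<in> carrier_mat d d" and "B \<in> carrier_mat d d"
    and "A * B = 0\<^sub>m d d"
    and "i \<le> d" and "j \<le> d" and "i + j > d"
  shows "char_coeff A i * char_coeff B j = 0"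
proof -
  have "vanishes_to_order d (map_poly (\<lambda>a. [:a:]) (char_poly A) * [:char_poly B:])"
    using assms(1-3) by (rule vanishes_to_order_char_poly_product)
  moreover have "(d - i) + (d - j) < d"
    using assms(4-6) by linarith
  ultimately have "coeff (char_poly A) (d - i) * coeff (char_poly B) (d - j) = 0"
    by (rule coeff_mult_eq_0_if_vanishes_to_order)
  then show ?thesis
    using assms(1,2) by (simp add: char_coeff_def)
qed

end
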